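(* Assume A1. For every $s_0\in\mathbb R^n$, $\lambda_P(D\mathcal F,s_0)=\log\operatorname{diam}(D\mathcal F,s_0)$.
   Context: Assumption A1: there are functions $f^i:\mathbb R^{nm}\times[0,\infty)\to\mathbb R^n$, $i=1,\dots,m$, and $f:\mathbb R^n\to\mathbb R^n$ such that (a) $f^i(s,\dots,s,t)=f(s)$ for all $i,s,t$; (b) $x\mapsto f^i(x,t)$ is $C^1$ for each $t$, with Jacobian $DF^t(x)=(\partial f^i/\partial x^j(x,t))_{i,j}\in\mathbb R^{nm\times nm}$; (c) $\|DF^t(x)\|\le\phi(x)$ for some locally bounded $\phi$; (d) $\|DF^t(x)-DF^t(y)\|\le K(x,y)\|x-y\|$ for some locally bounded $K$, all $t$; (e) $f^i(x,t)$ and $DF^t(x)$ measurable in $t$. For $t_0\ge0$, $s_0\in\mathbb R^n$: $s(t)$ solves $\dot s=f(s)$, $s(t_0)=s_0$; $U(t,t_0,s_0)$ is the solution matrix (identity at $t_0$) of $\dot{\delta x}=DF^t(\hat s(t))\delta x$, $\hat s=[s^\top,\dots,s^\top]^\top$. For $U=(U_{ij})_{i,j=1}^m$ with $n\times n$ blocks, $U_i=[U_{i1},\dots,U_{im}]$, $\operatorname{diam}(U)=\max_{i,j}\|U_i-U_j\|$, and $\operatorname{diam}(D\mathcal F,s_0)=\limsup_{t\to\infty}\sup_{t_0\ge0}\{\operatorname{diam}(U(t+t_0,t_0,s_0))\}^{1/t}$. Let $P_0\in\mathbb R^{n\times n}$ be orthogonal and $P=[P_1,P_2]\in\mathbb R^{nm\times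 nm}$ orthogonal with $P_1=\frac1{\sqrt m}\mathbf 1_m\otimes P_0$ and $P_2\in\mathbb R^{nm\times n(m-1)}$. Let $\tilde U(t,t_0,s_0)=P_2^\top U(t,t_0,s_0)P_2$ (the solution matrix of $\dot\phi=P_2^\top DF^t(\hat s(t))P_2\phi$). Define $\lambda(D_P\mathcal F,\tilde u,s_0)=\limsup_{t\to\infty}\sup_{t_0\ge0}\frac1t\log\|\tilde U(t+t_0,t_0,s_0)\tilde u\|$ for $\tilde u\in\mathbb R^{n(m-1)}$ and $\lambda_P(D\mathcal F,s_0)=\max_{\tilde u}\lambda(D_P\mathcal F,\tilde u,s_0)$. *)

theory Defs
  imports "HOL-Analysis.Analysis"
begin

text \<open>State space R^{nm} is modelled as real^('m::finite \<times> 'n::finite): component (i,k) is the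
  k-th coordinate of the i-th block (i = 1..m, k = 1..n).\<close>

definition locally_bounded :: "('a::metric_space \<Rightarrow> real) \<Rightarrow> bool" where
  "locally_bounded g \<longleftrightarrow> (\<forall>x. \<exists>e>0. bounded (g ` ball x e))"

definition diag_state :: "real^'n \<Rightarrow> real^('m::finite \<times> 'n::finite)" where
  "diag_state s = (\<chi> r. s $ snd r)"

definition stack_field :: "('m \<Rightarrow> real^('m::finite \<times> 'n::finite) \<Rightarrow> real \<Rightarrow> real^'n) \<Rightarrow> real \<Rightarrow> real^('m::finite \<times> 'n::finite) \<Rightarrow> real^('m::finite \<times> 'n::finite)" where
  "stack_field F t x = (\<chi> r. F (fst r) x t $ snd r)"

definition block_row :: "real^('m::finite \<times> 'n::finite)^('m::finite \<times> 'n::finite) \<Rightarrow> 'm \<Rightarrow> real^('m::finite \<times> 'n::finite)^'n" where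
  "block_row U i = (\<chi> k. U $ (i,k))"

definition diam_mat :: "real^('m::finite \<times> 'n::finite)^('m::finite \<times> 'n::finite) \<Rightarrow> real" where
  "diam_mat U = Max ((\<lambda>(i,j). norm (block_row U i - block_row U j)) ` UNIV)"

definition eln :: "ereal \<Rightarrow> ereal" where
  "eln x = (if x \<le> 0 then -\<infinity> else if x = \<infinity> then \<infinity> else ereal (ln (real_of_ereal x)))"

text \<open>diam(DF, s0), given the solution matrices U t0 t = U(t, t0, s0).\<close>
definition diam_rate :: "(real \<Rightarrow> real \<Rightarrow> real^('m::finite \<times> 'n::finite)^('m::finite \<times> 'n::finite)) \<Rightarrow> ereal" where
  "diam_rate U = Limsup at_top (\<lambda>t. SUP t0\<in>{0..}. ereal (diam_mat (U t0 (t + t0)) powr (1 / t)))"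

text \<open>P_1 = (1/sqrt m) 1_m \<otimes> P_0.\<close>
definition P1_of :: "real^'n::finite^'n \<Rightarrow> real^'n^('m::finite \<times> 'n::finite)" where
  "P1_of P0 = (\<chi> r. \<chi> l. P0 $ snd r $ l / sqrt (real CARD('m)))"

text \<open>The block matrix P = [P_1, P_2]; columns indexed by 'n + 'k.\<close>
definition block_P :: "real^'n^('m::finite \<times> 'n::finite) \<Rightarrow> real^'k::finite^('m::finite \<times> 'n::finite) \<Rightarrow> real^('n + 'k)^('m::finite \<times> 'n::finite)" where
  "block_P A B = (\<chi> r. \<chi> c. case c of Inl l \<Rightarrow> A $ r $ l | Inr j \<Rightarrow> B $ r $ j)"

text \<open>\<lambda>(D_P F, u, s0) with \<tilde>U(t,t0,s0) = P_2^T U(t,t0,s0) P_2.\<close>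
definition lyap_P :: "real^'k::finite^('m::finite \<times> 'n::finite) \<Rightarrow> (real \<Rightarrow> real \<Rightarrow> real^('m::finite \<times> 'n::finite)^('m::finite \<times> 'n::finite)) \<Rightarrow> real^'k \<Rightarrow> ereal" where
  "lyap_P P2 U u = Limsup at_top (\<lambda>t. SUP t0\<in>{0..}.
      ereal (1 / t) * eln (ereal (norm ((transpose P2 ** U t0 (t + t0) ** P2) *v u))))"

definition lambda_P :: "real^'k::finite^('m::finite \<times> 'n::finite) \<Rightarrow> (real \<Rightarrow> real \<Rightarrow> real^('m::finite \<times> 'n::finite)^('m::finite \<times> 'n::finite)) \<Rightarrow> ereal" where
  "lambda_P P2 U = (SUP u. lyap_P P2 U u)"

end

theory Submission
  imports Defs
begin

text \<open>The synchronised subspace \<open>{[s,\<dots>,s]}\<close>, which is the range of \<open>P\<^sub>1\<close>, is invariant under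
  every Jacobian \<open>DF\<^sup>t([s,\<dots>,s])\<close> (differentiate \<open>f\<^sup>i(s,\<dots>,s,t) = f(s)\<close>), hence, by Gronwall's
  inequality, under the solution matrices \<open>U\<close>. Consequently the block-row differences of \<open>U\<close> only
  see the transversal part \<open>P\<^sub>2 \<tilde>U P\<^sub>2\<^sup>T\<close>, while \<open>\<tilde>U = P\<^sub>2\<^sup>T U P\<^sub>2\<close> only sees the block-row
  differences of \<open>U\<close> because \<open>P\<^sub>2\<^sup>T\<close> annihilates synchronised vectors. So \<open>diam U\<close> and
  \<open>\<parallel>\<tilde>U\<parallel>\<close> are comparable up to constants, which disappear in the exponential growth rate.\<close>

(* Otherwise simp turns transpose A *v x into x v* A, out of reach of matrix_vector_mul_assoc. *)
declare transpose_matrix_vector [simp del]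

section \<open>Norms of matrices\<close>

lemma norm_matrix_vector_mult_le: "norm (A *v x) \<le> norm A * norm x"
  for A :: "real^'n::finite^'m::finite"
proof -
  have "norm (A *v x) = L2_set (\<lambda>i. \<bar>A $ i \<bullet> x\<bar>) UNIV"
    by (simp add: norm_vec_def matrix_vector_mult_def inner_vec_def mult.commute)
  also have "\<dots> \<le> L2_set (\<lambda>i. norm (A $ i) * norm x) UNIV"
    by (intro L2_set_mono Cauchy_Schwarz_ineq2) auto
  also have "\<dots> = norm A * norm x"
    by (simp add: norm_vec_def L2_set_left_distrib)
  finally show ?thesis .
qed

lemma norm_matrix_vector_mult_le_Max_columns:
  "norm (A *v x) \<le> real CARD('n) * norm x * Max (range (\<lambda>q. norm (A *v axis q 1)))"
  for A :: "real^'n::finite^'m::finite"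
proof -
  define M where "M = Max (range (\<lambda>q. norm (A *v axis q (1::real))))"
  have "A *v x = (\<Sum>q\<in>UNIV. x $ q *\<^sub>R (A *v axis q 1))"
    unfolding matrix_vector_mult_basis by (simp add: matrix_mult_sum scalar_mult_eq_scaleR)
  also have "norm \<dots> \<le> (\<Sum>q\<in>(UNIV::'n set). norm x * M)"
  proof (intro order_trans[OF norm_sum] sum_mono)
    fix q
    have "norm (x $ q *\<^sub>R (A *v axis q 1)) = \<bar>x $ q\<bar> * norm (A *v axis q 1)" by simp
    also have "\<dots> \<le> norm x * M"
      unfolding M_def by (intro mult_mono component_le_norm_cart Max_ge) auto
    finally show "norm (x $ q *\<^sub>R (A *v axis q 1)) \<le> norm x * M" .
  qed
  finally show ?thesis by (simp add: M_def)
qed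

lemma norm_matrix_le_sum_abs: "norm A \<le> (\<Sum>i\<in>UNIV. \<Sum>j\<in>UNIV. \<bar>A $ i $ j\<bar>)"
  for A :: "real^'n::finite^'m::finite"
proof -
  have "norm A \<le> (\<Sum>i\<in>UNIV. norm (A $ i))"
    by (simp add: norm_vec_def L2_set_le_sum)
  also have "\<dots> \<le> (\<Sum>i\<in>UNIV. \<Sum>j\<in>UNIV. \<bar>A $ i $ j\<bar>)"
    by (intro sum_mono norm_le_l1_cart)
  finally show ?thesis .
qed

section \<open>The extended logarithm and exponential growth rates\<close>

lemma mono_eln: "mono eln"
proof
  fix x y :: ereal assume "x \<le> y"
  then show "eln x \<le> eln y" by (cases x; cases y) (auto simp: eln_def)
qed

lemma surj_eln: "surj eln"
proof (rule surjI)
  fix y :: ereal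
  show "eln (case y of ereal r \<Rightarrow> ereal (exp r) | PInfty \<Rightarrow> \<infinity> | MInfty \<Rightarrow> 0) = y"
    by (cases y) (auto simp: eln_def)
qed

lemma continuous_on_eln: "continuous_on UNIV eln"
  by (rule continuous_onI_mono) (auto simp: surj_eln intro: monoD[OF mono_eln])

lemma eln_SUP:
  assumes "S \<noteq> {}"
  shows "eln (SUP x\<in>S. f x) = (SUP x\<in>S. eln (f x))"
proof -
  have "eln (Sup (f ` S)) = (SUP y\<in>f ` S. eln y)"
    using assms
    by (intro continuous_at_Sup_mono[OF mono_eln])
      (auto intro: continuous_on_imp_continuous_within[OF continuous_on_eln])
  then show ?thesis by (simp add: image_comp)
qed

lemma eln_Limsup: "F \<noteq> bot \<Longrightarrow> eln (Limsup F f) = Limsup F (\<lambda>x. eln (f x))"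
  by (rule Limsup_compose_continuous_mono[symmetric]) (auto simp: continuous_on_eln mono_eln)

lemma eln_powr:
  assumes "t > 0" "d \<ge> 0"
  shows "eln (ereal (d powr (1 / t))) = ereal (1 / t) * eln (ereal d)"
  using assms by (cases "d = 0") (auto simp: eln_def ln_powr)

lemma eln_le_ln_plus:
  assumes "t > 0" "0 \<le> a" "C > 0" "a \<le> C * b"
  shows "ereal (1 / t) * eln (ereal a) \<le> ereal (ln C / t) + ereal (1 / t) * eln (ereal b)"
proof (cases "a = 0")
  case True
  then show ?thesis using assms by (simp add: eln_def)
next
  case False
  with assms have "a > 0" by simp
  with assms have "0 < C * b" by linarith
  with assms have "b > 0" by (simp add: zero_less_mult_iff)
  have "ln a \<le> ln (C * b)" using \<open>a > 0\<close> \<open>0 < C * b\<close> assms(4) by simp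
  also have "\<dots> = ln C + ln b" using \<open>C > 0\<close> \<open>b > 0\<close> by (simp add: ln_mult)
  finally have "ln a \<le> ln C + ln b" .
  with \<open>t > 0\<close> have "ln a / t \<le> ln C / t + ln b / t"
    by (simp add: divide_right_mono flip: add_divide_distrib)
  with \<open>a > 0\<close> \<open>b > 0\<close> show ?thesis by (simp add: eln_def)
qed

lemma Limsup_le_plus_vanishing:
  fixes X Y :: "'a \<Rightarrow> ereal" and e :: "'a \<Rightarrow> real"
  assumes e: "(e \<longlongrightarrow> 0) F"
    and le: "eventually (\<lambda>t. X t \<le> ereal (e t) + Y t) F"
  shows "Limsup F X \<le> Limsup F Y"
  unfolding Limsup_le_iff
proof (intro allI impI)
  fix y assume "Limsup F Y < y"
  then obtain z where z: "Limsup F Y < ereal z" "ereal z < y"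
    by (metis dense ereal_dense2)
  have "((\<lambda>t. ereal (e t + z)) \<longlongrightarrow> ereal (0 + z)) F"
    by (intro tendsto_ereal tendsto_add e tendsto_const)
  then have "eventually (\<lambda>t. ereal (e t + z) < y) F"
    using z(2) by (intro order_tendstoD(2)) auto
  with le Limsup_lessD[OF z(1)] show "eventually (\<lambda>t. X t < y) F"
  proof eventually_elim
    case (elim t)
    have "X t \<le> ereal (e t) + Y t" by (rule elim(1))
    also have "\<dots> < ereal (e t + z)" using elim(2) by (cases "Y t") auto
    also have "\<dots> < y" by (rule elim(3))
    finally show ?case .
  qed
qed

lemma Limsup_Max_le:
  fixes Z :: "'k::finite \<Rightarrow> 'a \<Rightarrow> 'b::{complete_linorder,linorder_topology}"
  shows "Limsup F (\<lambda>t. Max (range (\<lambda>k. Z k t))) \<le> Max (range (\<lambda>k. Limsup F (Z k)))"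
  unfolding Limsup_le_iff
proof (intro allI impI)
  fix y assume "Max (range (\<lambda>k. Limsup F (Z k))) < y"
  then have "\<forall>k. eventually (\<lambda>t. Z k t < y) F" by (simp add: Limsup_lessD)
  then have "eventually (\<lambda>t. \<forall>k. Z k t < y) F" by (simp add: eventually_all_finite)
  then show "eventually (\<lambda>t. Max (range (\<lambda>k. Z k t)) < y) F"
    by eventually_elim simp
qed

text \<open>\<open>g t t\<^sub>0\<close> is a size at time \<open>t\<^sub>0 + t\<close> of a trajectory started at time \<open>t\<^sub>0\<close>.\<close>
definition exp_growth_rate :: "(real \<Rightarrow> real \<Rightarrow> real) \<Rightarrow> ereal" where
  "exp_growth_rate g = Limsup at_top (\<lambda>t. SUP t0\<in>{0..}. ereal (1 / t) * eln (ereal (g t t0)))"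

lemma exp_growth_rate_mono:
  assumes le: "\<And>t t0. t > 0 \<Longrightarrow> t0 \<ge> 0 \<Longrightarrow> g t t0 \<le> C * h t t0"
    and nonneg: "\<And>t t0. t > 0 \<Longrightarrow> t0 \<ge> 0 \<Longrightarrow> g t t0 \<ge> 0"
    and "C > 0"
  shows "exp_growth_rate g \<le> exp_growth_rate h"
  unfolding exp_growth_rate_def
proof (rule Limsup_le_plus_vanishing)
  show "((\<lambda>t. ln C / t) \<longlongrightarrow> 0) at_top"
    by (rule tendsto_divide_0[OF tendsto_const filterlim_at_top_imp_at_infinity[OF filterlim_ident]])
  show "eventually (\<lambda>t. (SUP t0\<in>{0..}. ereal (1 / t) * eln (ereal (g t t0))) \<le>
      ereal (ln C / t) + (SUP t0\<in>{0..}. ereal (1 / t) * eln (ereal (h t t0)))) at_top"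
    using eventually_gt_at_top[of 0]
  proof eventually_elim
    case (elim t)
    show ?case
    proof (rule SUP_least)
      fix t0 :: real assume "t0 \<in> {0..}"
      then have "ereal (1 / t) * eln (ereal (g t t0)) \<le> ereal (ln C / t) + ereal (1 / t) * eln (ereal (h t t0))"
        using elim le nonneg \<open>C > 0\<close> by (intro eln_le_ln_plus) auto
      also have "\<dots> \<le> ereal (ln C / t) + (SUP t0\<in>{0..}. ereal (1 / t) * eln (ereal (h t t0)))"
        using \<open>t0 \<in> {0..}\<close> by (intro add_left_mono SUP_upper)
      finally show "ereal (1 / t) * eln (ereal (g t t0)) \<le> \<dots>" .
    qed
  qed
qed

lemma exp_growth_rate_Max_le:
  fixes h :: "'k::finite \<Rightarrow> real \<Rightarrow> real \<Rightarrow> real"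
  shows "exp_growth_rate (\<lambda>t t0. Max (range (\<lambda>q. h q t t0))) \<le> Max (range (\<lambda>q. exp_growth_rate (h q)))"
proof -
  let ?Z = "\<lambda>q t. SUP t0\<in>{0..}. ereal (1 / t) * eln (ereal (h q t t0))"
  have "exp_growth_rate (\<lambda>t t0. Max (range (\<lambda>q. h q t t0))) \<le> Limsup at_top (\<lambda>t. Max (range (\<lambda>q. ?Z q t)))"
    unfolding exp_growth_rate_def
  proof (intro Limsup_mono always_eventually allI SUP_least)
    fix t t0 :: real assume "t0 \<in> {0..}"
    have "Max (range (\<lambda>q. h q t t0)) \<in> range (\<lambda>q. h q t t0)"
      by (rule Max_in) auto
    then obtain q where q: "Max (range (\<lambda>q. h q t t0)) = h q t t0" by blast
    have "ereal (1 / t) * eln (ereal (h q t t0)) \<le> ?Z q t"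
      using \<open>t0 \<in> {0..}\<close> by (rule SUP_upper)
    also have "\<dots> \<le> Max (range (\<lambda>q. ?Z q t))"
      by (intro Max_ge) auto
    finally show "ereal (1 / t) * eln (ereal (Max (range (\<lambda>q. h q t t0)))) \<le> Max (range (\<lambda>q. ?Z q t))"
      by (simp add: q)
  qed
  also have "\<dots> \<le> Max (range (\<lambda>q. exp_growth_rate (h q)))"
    unfolding exp_growth_rate_def by (rule Limsup_Max_le)
  finally show ?thesis .
qed

lemma eln_Limsup_SUP_powr:
  assumes "\<And>t t0. d t t0 \<ge> 0"
  shows "eln (Limsup at_top (\<lambda>t. SUP t0\<in>{0..}. ereal (d t t0 powr (1 / t)))) = exp_growth_rate d"
proof -
  have "eln (Limsup at_top (\<lambda>t. SUP t0\<in>{0..}. ereal (d t t0 powr (1 / t))))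
      = Limsup at_top (\<lambda>t. SUP t0\<in>{0..}. eln (ereal (d t t0 powr (1 / t))))"
    by (simp add: eln_Limsup eln_SUP)
  also have "\<dots> = exp_growth_rate d"
    unfolding exp_growth_rate_def
    by (rule Limsup_eq, use eventually_gt_at_top[of 0] in eventually_elim)
      (simp add: eln_powr assms)
  finally show ?thesis .
qed

section \<open>The synchronised subspace\<close>

definition synchronised :: "real^('m::finite \<times> 'n::finite) \<Rightarrow> bool" where
  "synchronised y \<longleftrightarrow> (\<forall>r r'. snd r = snd r' \<longrightarrow> y $ r = y $ r')"

definition sync_defect :: "'m \<Rightarrow> real^('m::finite \<times> 'n::finite) \<Rightarrow> real^('m \<times> 'n)" where
  "sync_defect i0 z = z - diag_state (\<chi> k. z $ (i0, k))"

lemma synchronised_diag_state: "synchronised (diag_state v)"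
  by (simp add: synchronised_def diag_state_def)

lemma synchronised_add: "synchronised x \<Longrightarrow> synchronised y \<Longrightarrow> synchronised (x + y)"
  unfolding synchronised_def by (metis vector_add_component)

lemma diag_state_scaleR: "diag_state (a *\<^sub>R x) = a *\<^sub>R diag_state x"
  by (simp add: diag_state_def vec_eq_iff)

lemma bounded_linear_diag_state: "bounded_linear (diag_state :: real^'n \<Rightarrow> real^('m::finite \<times> 'n::finite))"
  by (simp add: linear_conv_bounded_linear[symmetric] linear_iff diag_state_def vec_eq_iff)

lemma bounded_linear_sync_defect: "bounded_linear (sync_defect i0)"
  by (simp add: linear_conv_bounded_linear[symmetric] linear_iff sync_defect_def diag_state_def
      vec_eq_iff algebra_simps)

lemma synchronised_iff: "synchronised y \<longleftrightarrow> y = diag_state (\<chi> k. y $ (i, k))"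
proof
  assume "synchronised y"
  then show "y = diag_state (\<chi> k. y $ (i, k))"
    unfolding synchronised_def diag_state_def vec_eq_iff by (metis prod.collapse snd_conv vec_lambda_beta)
qed (metis synchronised_diag_state)

lemma sync_defect_eq_0_iff: "sync_defect i0 z = 0 \<longleftrightarrow> synchronised z"
  by (simp add: sync_defect_def synchronised_iff[of z i0])

lemma sync_defect_nth: "sync_defect i0 z $ (i, k) = z $ (i, k) - z $ (i0, k)"
  by (simp add: sync_defect_def diag_state_def)

lemma jacobian_preserves_synchronised:
  fixes F :: "'m::finite \<Rightarrow> real^('m \<times> 'n::finite) \<Rightarrow> real \<Rightarrow> real^'n"
  assumes sync_field: "\<And>i s. F i (diag_state s) t = f s"
    and deriv: "\<And>x. (stack_field F t has_derivative (\<lambda>h. DF x *v h)) (at x)"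
  shows "synchronised (DF (diag_state s) *v diag_state v)"
  unfolding synchronised_def
proof (intro allI impI)
  fix r r' :: "'m \<times> 'n" assume "snd r = snd r'"
  define L where "L y = y $ r - y $ r'" for y :: "real^('m \<times> 'n)"
  have "bounded_linear L" unfolding L_def by (intro bounded_linear_sub bounded_linear_vec_nth)
  have "((L \<circ> stack_field F t \<circ> diag_state) has_derivative (L \<circ> (\<lambda>h. DF (diag_state s) *v h) \<circ> diag_state)) (at s)"
    by (intro diff_chain_at bounded_linear_imp_has_derivative deriv bounded_linear_diag_state
        \<open>bounded_linear L\<close>)
  moreover have "L \<circ> stack_field F t \<circ> diag_state = (\<lambda>_. 0)"
    using \<open>snd r = snd r'\<close> by (simp add: L_def stack_field_def sync_field fun_eq_iff)
  ultimately have "L \<circ> (\<lambda>h. DF (diag_state s) *v h) \<circ> diag_state = (\<lambda>_. 0)"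
    using has_derivative_const has_derivative_unique by metis
  then have "L (DF (diag_state s) *v diag_state v) = 0" by (metis comp_apply)
  then show "(DF (diag_state s) *v diag_state v) $ r = (DF (diag_state s) *v diag_state v) $ r'"
    by (simp add: L_def)
qed

lemma P1_of_mult:
  "P1_of P0 *v w = (diag_state ((1 / sqrt (real CARD('m))) *\<^sub>R (P0 *v w)) :: real^('m::finite \<times> 'n::finite))"
  for P0 :: "real^'n^'n"
  by (simp add: vec_eq_iff matrix_vector_mult_def P1_of_def diag_state_def sum_divide_distrib)

lemma diag_state_eq_P1_of_mult:
  fixes P0 :: "real^'n::finite^'n"
  assumes "orthogonal_matrix P0"
  shows "(diag_state v :: real^('m::finite \<times> 'n)) = P1_of P0 *v (sqrt (real CARD('m)) *\<^sub>R (transpose P0 *v v))"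
proof -
  have "P0 *v (transpose P0 *v v) = v"
    using assms by (simp add: orthogonal_matrix_def matrix_vector_mul_assoc)
  then show ?thesis
    by (simp add: P1_of_mult matrix_vector_mult_scaleR diag_state_scaleR)
qed

lemma sum_UNIV_Plus: "(\<Sum>c\<in>UNIV. g c) = (\<Sum>a\<in>UNIV. g (Inl a)) + (\<Sum>b\<in>UNIV. g (Inr b))"
  for g :: "'a::finite + 'b::finite \<Rightarrow> 'c::comm_monoid_add"
  by (subst UNIV_Plus_UNIV[symmetric], subst sum.Plus) auto

lemma transpose_P2_mult_P1_of:
  fixes P0 :: "real^'n::finite^'n" and P2 :: "real^'k::finite^('m::finite \<times> 'n)"
  assumes "transpose (block_P (P1_of P0) P2) ** block_P (P1_of P0) P2 = mat 1"
  shows "transpose P2 ** P1_of P0 = 0"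
proof -
  have "(transpose P2 ** P1_of P0) $ j $ l
      = (transpose (block_P (P1_of P0) P2) ** block_P (P1_of P0) P2) $ Inr j $ Inl l" for j l
    by (simp add: matrix_matrix_mult_def transpose_def block_P_def)
  with assms show ?thesis by (simp add: vec_eq_iff mat_def)
qed

lemma P1_P2_decomposition:
  fixes P0 :: "real^'n::finite^'n" and P2 :: "real^'k::finite^('m::finite \<times> 'n)"
  assumes "block_P (P1_of P0) P2 ** transpose (block_P (P1_of P0) P2) = mat 1"
  shows "x = P1_of P0 *v (transpose (P1_of P0) *v x) + P2 *v (transpose P2 *v x)"
proof -
  have "P1_of P0 ** transpose (P1_of P0) + P2 ** transpose P2
      = block_P (P1_of P0) P2 ** transpose (block_P (P1_of P0) P2)"
    by (simp add: vec_eq_iff matrix_matrix_mult_def transpose_def block_P_def sum_UNIV_Plus)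
  with assms have "(P1_of P0 ** transpose (P1_of P0) + P2 ** transpose P2) *v x = x" by simp
  then show ?thesis by (simp add: matrix_vector_mult_add_rdistrib matrix_vector_mul_assoc)
qed

lemma transpose_P2_synchronised:
  fixes P0 :: "real^'n::finite^'n" and P2 :: "real^'k::finite^('m::finite \<times> 'n)"
  assumes "transpose (block_P (P1_of P0) P2) ** block_P (P1_of P0) P2 = mat 1"
    and "orthogonal_matrix P0" and "synchronised y"
  shows "transpose P2 *v y = 0"
proof -
  obtain v where "y = diag_state v" using assms(3) synchronised_iff by blast
  then have "y = P1_of P0 *v (sqrt (real CARD('m)) *\<^sub>R (transpose P0 *v v))"
    using diag_state_eq_P1_of_mult[OF assms(2)] by simp
  then show ?thesis
    using transpose_P2_mult_P1_of[OF assms(1)] by (simp add: matrix_vector_mul_assoc)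
qed

section \<open>Invariance of the synchronised subspace under the linearised flow\<close>

lemma has_integral_scaled_power:
  fixes a t c K :: real
  assumes "a \<le> t"
  shows "((\<lambda>s. c * (K * (s - a)) ^ k / fact k) has_integral (c * K ^ k * (t - a) ^ Suc k / fact (Suc k))) {a..t}"
proof -
  have "((\<lambda>s. c * K ^ k * (s - a) ^ Suc k / fact (Suc k)) has_real_derivative c * (K * (x - a)) ^ k / fact k)
      (at x within {a..t})" for x
  proof -
    have "((\<lambda>s. (s - a) ^ Suc k) has_real_derivative
        of_nat (Suc k) * ((1 - 0) * (x - a) ^ (Suc k - Suc 0))) (at x within {a..t})"
      by (intro DERIV_power DERIV_diff DERIV_ident DERIV_const)
    then have "((\<lambda>s. (s - a) ^ Suc k) has_real_derivative real (Suc k) * (x - a) ^ k) (at x within {a..t})"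
      by simp
    then have "((\<lambda>s. c * K ^ k * (s - a) ^ Suc k / fact (Suc k)) has_real_derivative
        c * K ^ k * (real (Suc k) * (x - a) ^ k) / fact (Suc k)) (at x within {a..t})"
      by (intro DERIV_cdivide DERIV_cmult) simp
    moreover have "c * K ^ k * (real (Suc k) * (x - a) ^ k) / fact (Suc k) = c * (K * (x - a)) ^ k / fact k"
      by (simp only: power_mult_distrib fact_Suc) (simp add: divide_simps del: of_nat_Suc)
    ultimately show ?thesis by metis
  qed
  then show ?thesis
    using fundamental_theorem_of_calculus[OF assms, of "\<lambda>s. c * K ^ k * (s - a) ^ Suc k / fact (Suc k)"]
    by (simp add: has_real_derivative_iff_has_vector_derivative)
qed

text \<open>Iterating the hypothesis gives \<open>g \<le> c (K (t - a))\<^sup>k / k!\<close> for every \<open>k\<close>, where \<open>c\<close> bounds \<open>\<bar>g\<bar>\<close>.\<close>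
lemma gronwall_zero:
  fixes g :: "real \<Rightarrow> real"
  assumes cont: "continuous_on {a..b} g"
    and "K \<ge> 0"
    and le: "\<And>t. t \<in> {a..b} \<Longrightarrow> g t \<le> K * integral {a..t} g"
    and nonneg: "\<And>t. t \<in> {a..b} \<Longrightarrow> g t \<ge> 0"
    and t: "t \<in> {a..b}"
  shows "g t = 0"
proof -
  obtain c where c: "\<And>x. x \<in> {a..b} \<Longrightarrow> norm (g x) \<le> c"
    using compact_imp_bounded[OF compact_continuous_image[OF cont compact_Icc]] bounded_iff
    by (metis imageI)
  have iterate: "\<forall>t\<in>{a..b}. g t \<le> c * (K * (t - a)) ^ k / fact k" for k
  proof (induction k)
    case 0
    show ?case using c abs_le_D1 by fastforce
  next
    case (Suc k)
    show ?case
    proof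
      fix t assume t: "t \<in> {a..b}"
      then have sub: "{a..t} \<subseteq> {a..b}" by auto
      have "integral {a..t} g \<le> integral {a..t} (\<lambda>s. c * (K * (s - a)) ^ k / fact k)"
      proof (rule integral_le)
        show "g integrable_on {a..t}"
          by (rule integrable_continuous_interval[OF continuous_on_subset[OF cont sub]])
        show "(\<lambda>s. c * (K * (s - a)) ^ k / fact k) integrable_on {a..t}"
          using has_integral_scaled_power[of a t c K k] t by auto
      qed (use Suc.IH sub in auto)
      also have "\<dots> = c * K ^ k * (t - a) ^ Suc k / fact (Suc k)"
        using t by (intro integral_unique has_integral_scaled_power) auto
      finally have "K * integral {a..t} g \<le> K * (c * K ^ k * (t - a) ^ Suc k / fact (Suc k))"
        using \<open>K \<ge> 0\<close> by (rule mult_left_mono)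
      also have "\<dots> = c * (K * (t - a)) ^ Suc k / fact (Suc k)"
        by (simp add: power_mult_distrib)
      finally show "g t \<le> c * (K * (t - a)) ^ Suc k / fact (Suc k)"
        using le[OF t] by linarith
    qed
  qed
  have "(\<lambda>k. c * ((K * (t - a)) ^ k / fact k)) \<longlonglongrightarrow> c * 0"
    using summable_LIMSEQ_zero[OF summable_exp_generic[of "K * (t - a)"]]
    by (intro tendsto_mult tendsto_const) (simp add: divide_inverse_commute)
  then have "g t \<le> 0"
    using iterate t by (intro tendsto_le[OF trivial_limit_sequentially _ tendsto_const]) auto
  with nonneg[OF t] show ?thesis by simp
qed

text \<open>The defect \<open>w = L (U d)\<close> satisfies \<open>\<parallel>w t\<parallel> \<le> K \<integral>\<^sub>a\<^sup>t \<parallel>w\<parallel>\<close>, so Gronwall's inequality applies.\<close>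
lemma linear_flow_preserves_kernel:
  fixes A U :: "real \<Rightarrow> real^'a::finite^'a" and L :: "real^'a \<Rightarrow> real^'a"
  assumes L: "bounded_linear L"
    and "a \<le> b"
    and int: "\<And>t. t \<in> {a..b} \<Longrightarrow> (\<lambda>\<tau>. A \<tau> ** U \<tau>) integrable_on {a..t}"
    and sol: "\<And>t. t \<in> {a..b} \<Longrightarrow> U t = mat 1 + integral {a..t} (\<lambda>\<tau>. A \<tau> ** U \<tau>)"
    and defect: "\<And>\<tau> x. \<tau> \<in> {a..b} \<Longrightarrow> norm (L (A \<tau> *v x)) \<le> K * norm (L x)"
    and "K \<ge> 0" and "L d = 0"
  shows "L (U b *v d) = 0"
proof -
  define w where "w t = L (U t *v d)" for t
  define h where "h \<tau> = L ((A \<tau> ** U \<tau>) *v d)" for \<tau>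
  have "linear (\<lambda>M::real^'a^'a. M *v d)"
    by (rule linearI) (simp_all add: matrix_vector_mult_add_rdistrib vec_eq_iff matrix_vector_mult_def
        sum_distrib_left mult.assoc distrib_right sum.distrib)
  then have blh: "bounded_linear (\<lambda>M. L (M *v d))"
    by (intro bounded_linear_compose[OF L]) (simp add: linear_conv_bounded_linear)
  have hint: "h integrable_on {a..t}" if "t \<in> {a..b}" for t
    using integrable_linear[OF int[OF that] blh] by (simp add: h_def[abs_def] comp_def)
  have w_eq: "w t = integral {a..t} h" if "t \<in> {a..b}" for t
    using sol[OF that] integral_linear[OF int[OF that] blh] \<open>L d = 0\<close> linear_add[OF bounded_linear.linear[OF L]]
    by (simp add: w_def h_def[abs_def] comp_def matrix_vector_mult_add_rdistrib)
  have "continuous_on {a..b} w"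
    using indefinite_integral_continuous_1[OF hint[of b]] \<open>a \<le> b\<close> w_eq by (auto intro: continuous_on_eq)
  then have cont: "continuous_on {a..b} (\<lambda>t. norm (w t))" by (rule continuous_on_norm)
  have "norm (w t) \<le> K * integral {a..t} (\<lambda>\<tau>. norm (w \<tau>))" if t: "t \<in> {a..b}" for t
  proof -
    have sub: "{a..t} \<subseteq> {a..b}" using t by auto
    have "norm (w t) \<le> integral {a..t} (\<lambda>\<tau>. K * norm (w \<tau>))"
      unfolding w_eq[OF t]
    proof (rule integral_norm_bound_integral)
      show "h integrable_on {a..t}" using t by (rule hint)
      show "(\<lambda>\<tau>. K * norm (w \<tau>)) integrable_on {a..t}"
        by (intro integrable_continuous_interval continuous_on_mult continuous_on_const continuous_on_subset[OF cont sub])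
      show "norm (h \<tau>) \<le> K * norm (w \<tau>)" if "\<tau> \<in> {a..t}" for \<tau>
        using defect[of \<tau> "U \<tau> *v d"] that sub by (auto simp: h_def w_def matrix_vector_mul_assoc)
    qed
    then show ?thesis by simp
  qed
  then have "norm (w b) = 0"
    using \<open>a \<le> b\<close> \<open>K \<ge> 0\<close> by (intro gronwall_zero[OF cont]) auto
  then show ?thesis by (simp add: w_def)
qed

lemma locally_bounded_imp_bounded_above_on_compact:
  fixes \<phi> :: "'a::metric_space \<Rightarrow> real"
  assumes "locally_bounded \<phi>" and "compact C"
  obtains B where "\<And>x. x \<in> C \<Longrightarrow> \<phi> x \<le> B"
proof -
  obtain e where e: "\<And>x. e x > 0" "\<And>x. bounded (\<phi> ` ball x (e x))"
    using assms(1) unfolding locally_bounded_def by metis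
  have "C \<subseteq> (\<Union>x\<in>C. ball x (e x))" using e(1) by auto
  then obtain D where D: "D \<subseteq> C" "finite D" "C \<subseteq> (\<Union>x\<in>D. ball x (e x))"
    using compactE_image[OF assms(2), of C "\<lambda>x. ball x (e x)"] by auto
  have "\<exists>b. \<forall>y\<in>ball x (e x). \<phi> y \<le> b" for x
    using e(2)[of x] unfolding bounded_iff by (auto dest: abs_le_D1)
  then obtain b where b: "\<And>x y. y \<in> ball x (e x) \<Longrightarrow> \<phi> y \<le> b x" by metis
  show ?thesis
  proof
    fix y assume "y \<in> C"
    then obtain x where x: "x \<in> D" "y \<in> ball x (e x)" using D by auto
    then have "\<phi> y \<le> b x" using b by blast
    also have "b x \<le> Max (b ` D)" using x D by (intro Max_ge) auto
    finally show "\<phi> y \<le> Max (b ` D)" .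
  qed
qed

lemma sync_defect_mult_synchronising:
  assumes "\<And>v. synchronised (M *v diag_state v)"
  shows "sync_defect i0 (M *v x) = sync_defect i0 (M *v sync_defect i0 x)"
proof -
  let ?c = "diag_state (\<chi> k. x $ (i0, k))"
  have "M *v x = M *v sync_defect i0 x + M *v ?c"
    by (simp add: sync_defect_def flip: matrix_vector_right_distrib)
  then have "sync_defect i0 (M *v x) = sync_defect i0 (M *v sync_defect i0 x) + sync_defect i0 (M *v ?c)"
    by (simp add: linear_add[OF bounded_linear.linear[OF bounded_linear_sync_defect]])
  also have "sync_defect i0 (M *v ?c) = 0"
    using assms sync_defect_eq_0_iff by blast
  finally show ?thesis by simp
qed

lemma flow_preserves_synchronised:
  fixes F :: "'m::finite \<Rightarrow> real^('m \<times> 'n::finite) \<Rightarrow> real \<Rightarrow> real^'n"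
    and DF :: "real \<Rightarrow> real^('m \<times> 'n) \<Rightarrow> real^('m \<times> 'n)^('m \<times> 'n)"
    and S :: "real \<Rightarrow> real \<Rightarrow> real^'n"
    and U :: "real \<Rightarrow> real \<Rightarrow> real^('m \<times> 'n)^('m \<times> 'n)"
  assumes sync_field: "\<And>i s t. t \<ge> 0 \<Longrightarrow> F i (diag_state s) t = f s"
    and deriv: "\<And>t x. t \<ge> 0 \<Longrightarrow> (stack_field F t has_derivative (\<lambda>h. DF t x *v h)) (at x)"
    and DF_bound: "\<exists>\<phi>. locally_bounded \<phi> \<and> (\<forall>t\<ge>0. \<forall>x. norm (DF t x) \<le> \<phi> x)"
    and S_ode: "\<And>t. t \<ge> t0 \<Longrightarrow> (S t0 has_vector_derivative f (S t0 t)) (at t within {t0..})"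
    and U_int: "\<And>t. t \<ge> t0 \<Longrightarrow> (\<lambda>\<tau>. DF \<tau> (diag_state (S t0 \<tau>)) ** U t0 \<tau>) integrable_on {t0..t}"
    and U_sol: "\<And>t. t \<ge> t0 \<Longrightarrow> U t0 t = mat 1 + integral {t0..t} (\<lambda>\<tau>. DF \<tau> (diag_state (S t0 \<tau>)) ** U t0 \<tau>)"
    and "0 \<le> t0" "t0 \<le> T"
  shows "synchronised (U t0 T *v diag_state v)"
proof -
  define A where "A \<tau> = DF \<tau> (diag_state (S t0 \<tau>))" for \<tau>
  obtain \<phi> where \<phi>: "locally_bounded \<phi>" "\<And>t x. t \<ge> 0 \<Longrightarrow> norm (DF t x) \<le> \<phi> x"
    using DF_bound by blast
  have "continuous_on {t0..T} (S t0)"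
    unfolding continuous_on_eq_continuous_within
  proof
    fix \<tau> assume "\<tau> \<in> {t0..T}"
    then have "continuous (at \<tau> within {t0..}) (S t0)"
      using S_ode[of \<tau>] by (auto intro: has_vector_derivative_continuous)
    then show "continuous (at \<tau> within {t0..T}) (S t0)"
      by (rule continuous_within_subset) auto
  qed
  then have "compact ((\<lambda>\<tau>. diag_state (S t0 \<tau>) :: real^('m \<times> 'n)) ` {t0..T})"
    by (intro compact_continuous_image continuous_on_compose2[OF linear_continuous_on[OF bounded_linear_diag_state]])
      auto
  then obtain B where "\<And>y. y \<in> (\<lambda>\<tau>. diag_state (S t0 \<tau>)) ` {t0..T} \<Longrightarrow> \<phi> y \<le> B"
    using locally_bounded_imp_bounded_above_on_compact[OF \<phi>(1)] by blast
  then have B: "norm (A \<tau>) \<le> B" if "\<tau> \<in> {t0..T}" for \<tau>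
    using \<phi>(2)[of \<tau> "diag_state (S t0 \<tau>)"] that \<open>0 \<le> t0\<close> by (force simp: A_def)
  obtain Kd where Kd: "Kd > 0" "\<And>x. norm (sync_defect undefined x :: real^('m \<times> 'n)) \<le> norm x * Kd"
    using bounded_linear.pos_bounded[OF bounded_linear_sync_defect] by blast
  have defect: "norm (sync_defect undefined (A \<tau> *v x)) \<le> (Kd * max B 0) * norm (sync_defect undefined x)"
    if "\<tau> \<in> {t0..T}" for \<tau> x
  proof -
    have "\<And>v. synchronised (A \<tau> *v diag_state v)"
      unfolding A_def
    proof (rule jacobian_preserves_synchronised)
      show "F i (diag_state s) \<tau> = f s" for i s
        using that \<open>0 \<le> t0\<close> by (intro sync_field) auto
      show "(stack_field F \<tau> has_derivative (\<lambda>h. DF \<tau> x *v h)) (at x)" for x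
        using that \<open>0 \<le> t0\<close> by (intro deriv) auto
    qed
    then have "norm (sync_defect undefined (A \<tau> *v x)) = norm (sync_defect undefined (A \<tau> *v sync_defect undefined x))"
      by (metis sync_defect_mult_synchronising)
    also have "\<dots> \<le> norm (A \<tau> *v sync_defect undefined x) * Kd"
      by (rule Kd(2))
    also have "\<dots> \<le> norm (A \<tau>) * norm (sync_defect undefined x) * Kd"
      using Kd(1) by (intro mult_right_mono norm_matrix_vector_mult_le) auto
    also have "\<dots> \<le> (Kd * max B 0) * norm (sync_defect undefined x)"
      using B[OF that] Kd by (simp add: mult_right_mono mult_left_mono mult_ac)
    finally show ?thesis .
  qed
  have "sync_defect undefined (U t0 T *v diag_state v) = 0"
  proof (rule linear_flow_preserves_kernel[OF bounded_linear_sync_defect \<open>t0 \<le> T\<close> _ _ defect])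
    show "(\<lambda>\<tau>. A \<tau> ** U t0 \<tau>) integrable_on {t0..t}" if "t \<in> {t0..T}" for t
      using U_int that by (simp add: A_def)
    show "U t0 t = mat 1 + integral {t0..t} (\<lambda>\<tau>. A \<tau> ** U t0 \<tau>)" if "t \<in> {t0..T}" for t
      using U_sol that by (simp add: A_def)
    show "0 \<le> Kd * max B 0" using Kd(1) by simp
    show "sync_defect undefined (diag_state v) = 0"
      by (simp add: sync_defect_eq_0_iff synchronised_diag_state)
  qed
  then show ?thesis by (simp add: sync_defect_eq_0_iff)
qed

section \<open>Comparing the diameter with the transversal part\<close>

lemma norm_block_row_diff_le_diam_mat: "norm (block_row V i - block_row V j) \<le> diam_mat V"
  unfolding diam_mat_def by (rule Max_ge) (auto intro: image_eqI[where x = "(i, j)"])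

lemma diam_mat_nonneg: "0 \<le> diam_mat V"
  using norm_block_row_diff_le_diam_mat[of V undefined undefined] norm_ge_zero order_trans by blast

lemma norm_sync_defect_mult_le_diam_mat:
  "norm (sync_defect i0 (V *v x)) \<le> real CARD('m \<times> 'n) * diam_mat V * norm x"
  for V :: "real^('m::finite \<times> 'n::finite)^('m \<times> 'n)"
proof -
  have "\<bar>sync_defect i0 (V *v x) $ r\<bar> \<le> diam_mat V * norm x" for r
  proof -
    obtain i k where r: "r = (i, k)" by (cases r)
    have "\<bar>sync_defect i0 (V *v x) $ r\<bar> = \<bar>(block_row V i - block_row V i0) $ k \<bullet> x\<bar>"
      by (simp add: r sync_defect_nth matrix_vector_mult_def inner_vec_def block_row_def
          algebra_simps flip: sum_subtractf)
    also have "\<dots> \<le> norm ((block_row V i - block_row V i0) $ k) * norm x"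
      by (rule Cauchy_Schwarz_ineq2)
    also have "\<dots> \<le> diam_mat V * norm x"
      using order_trans[OF Finite_Cartesian_Product.norm_nth_le norm_block_row_diff_le_diam_mat]
      by (rule mult_right_mono) simp
    finally show ?thesis .
  qed
  then have "norm (sync_defect i0 (V *v x)) \<le> (\<Sum>r\<in>(UNIV :: ('m \<times> 'n) set). diam_mat V * norm x)"
    by (intro order_trans[OF norm_le_l1_cart] sum_mono)
  then show ?thesis by simp
qed

lemma transpose_P2_sync_defect:
  fixes P0 :: "real^'n::finite^'n" and P2 :: "real^'k::finite^('m::finite \<times> 'n)"
  assumes "transpose (block_P (P1_of P0) P2) ** block_P (P1_of P0) P2 = mat 1"
    and "orthogonal_matrix P0"
  shows "transpose P2 *v sync_defect i0 y = transpose P2 *v y"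
  using transpose_P2_synchronised[OF assms synchronised_diag_state]
  by (simp add: sync_defect_def matrix_vector_mult_diff_distrib)

lemma norm_reduced_mult_le_diam_mat:
  fixes P0 :: "real^'n::finite^'n" and P2 :: "real^'k::finite^('m::finite \<times> 'n)"
  assumes "transpose (block_P (P1_of P0) P2) ** block_P (P1_of P0) P2 = mat 1"
    and "orthogonal_matrix P0"
  obtains C where "C > 0" "\<And>V. norm ((transpose P2 ** V ** P2) *v u) \<le> C * diam_mat V"
proof
  define x where "x = P2 *v u"
  show "norm (transpose P2) * real CARD('m \<times> 'n) * norm x + 1 > 0"
    by (simp add: add_nonneg_pos)
  fix V :: "real^('m \<times> 'n)^('m \<times> 'n)"
  have "(transpose P2 ** V ** P2) *v u = transpose P2 *v sync_defect undefined (V *v x)"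
    by (simp add: transpose_P2_sync_defect[OF assms] matrix_vector_mul_assoc matrix_mul_assoc x_def)
  then have "norm ((transpose P2 ** V ** P2) *v u) \<le> norm (transpose P2) * norm (sync_defect undefined (V *v x))"
    by (simp add: norm_matrix_vector_mult_le)
  also have "\<dots> \<le> norm (transpose P2) * (real CARD('m \<times> 'n) * diam_mat V * norm x)"
    by (intro mult_left_mono norm_sync_defect_mult_le_diam_mat) simp
  also have "\<dots> \<le> (norm (transpose P2) * real CARD('m \<times> 'n) * norm x + 1) * diam_mat V"
    using diam_mat_nonneg[of V] by (simp add: algebra_simps)
  finally show "norm ((transpose P2 ** V ** P2) *v u) \<le> (norm (transpose P2) * real CARD('m \<times> 'n) * norm x + 1) * diam_mat V" .
qed

lemma synchronised_mult_minus_reduced: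
  fixes P0 :: "real^'n::finite^'n" and P2 :: "real^'k::finite^('m::finite \<times> 'n)"
  assumes P_orth: "block_P (P1_of P0) P2 ** transpose (block_P (P1_of P0) P2) = mat 1"
    and sync: "\<And>v. synchronised (V *v diag_state v)"
  shows "synchronised (V *v x - P2 *v ((transpose P2 ** V ** P2) *v (transpose P2 *v x)))"
proof -
  define b where "b = transpose P2 *v x"
  define y where "y = V *v (P2 *v b)"
  have "x = P1_of P0 *v (transpose (P1_of P0) *v x) + P2 *v b"
    unfolding b_def by (rule P1_P2_decomposition[OF P_orth])
  then have Vx: "V *v x = V *v (P1_of P0 *v (transpose (P1_of P0) *v x)) + y"
    unfolding y_def by (metis matrix_vector_right_distrib)
  have "transpose P2 *v y = (transpose P2 ** V ** P2) *v b"
    by (simp add: y_def matrix_vector_mul_assoc matrix_mul_assoc)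
  then have "y - P2 *v ((transpose P2 ** V ** P2) *v b) = P1_of P0 *v (transpose (P1_of P0) *v y)"
    using P1_P2_decomposition[OF P_orth, of y] by (simp only: diff_eq_eq)
  then have "V *v x - P2 *v ((transpose P2 ** V ** P2) *v b)
      = V *v (P1_of P0 *v (transpose (P1_of P0) *v x)) + P1_of P0 *v (transpose (P1_of P0) *v y)"
    by (subst Vx) (simp add: add_diff_eq[symmetric])
  then show ?thesis
    unfolding b_def[symmetric] using sync
    by (simp add: P1_of_mult synchronised_add synchronised_diag_state)
qed

lemma diam_mat_le_reduced_columns:
  fixes P0 :: "real^'n::finite^'n" and P2 :: "real^'k::finite^('m::finite \<times> 'n)"
  assumes P_orth: "block_P (P1_of P0) P2 ** transpose (block_P (P1_of P0) P2) = mat 1"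
  obtains C where "C > 0" "\<And>V. (\<And>v. synchronised (V *v diag_state v)) \<Longrightarrow>
      diam_mat V \<le> C * Max (range (\<lambda>q. norm ((transpose P2 ** V ** P2) *v axis q 1)))"
proof
  define E where "E = 2 * norm P2 * real CARD('k) * norm (transpose P2)"
  show "real CARD('n) * real CARD('m \<times> 'n) * E + 1 > 0"
    by (simp add: E_def add_nonneg_pos)
  fix V :: "real^('m \<times> 'n)^('m \<times> 'n)"
  assume sync: "\<And>v. synchronised (V *v diag_state v)"
  define M where "M = Max (range (\<lambda>q. norm ((transpose P2 ** V ** P2) *v axis q (1::real))))"
  have "M \<ge> 0"
    unfolding M_def by (rule order_trans[OF norm_ge_zero Max_ge]) auto
  have entry: "\<bar>V $ (i, k) $ r - V $ (j, k) $ r\<bar> \<le> E * M" for i j k r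
  proof -
    define e where "e = P2 *v ((transpose P2 ** V ** P2) *v (transpose P2 *v axis r 1))"
    have "(V *v axis r 1 - e) $ (i, k) = (V *v axis r 1 - e) $ (j, k)"
      using synchronised_mult_minus_reduced[OF P_orth sync, of "axis r 1"]
      unfolding synchronised_def e_def by simp
    then have "V $ (i, k) $ r - V $ (j, k) $ r = e $ (i, k) - e $ (j, k)"
      by (simp add: matrix_vector_mult_basis column_def)
    also have "\<bar>\<dots>\<bar> \<le> 2 * norm e"
      using component_le_norm_cart[of e "(i, k)"] component_le_norm_cart[of e "(j, k)"] by simp
    also have "norm e \<le> norm P2 * (real CARD('k) * norm (transpose P2 *v axis r 1) * M)"
      unfolding e_def M_def
      by (intro order_trans[OF norm_matrix_vector_mult_le] mult_left_mono
          norm_matrix_vector_mult_le_Max_columns) simp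
    also have "norm (transpose P2 *v axis r (1::real)) \<le> norm (transpose P2)"
      using norm_matrix_vector_mult_le[of "transpose P2" "axis r 1"] by simp
    finally show ?thesis
      using \<open>M \<ge> 0\<close> by (simp add: E_def mult_left_mono mult_right_mono mult_ac)
  qed
  have "norm (block_row V i - block_row V j) \<le> real CARD('n) * real CARD('m \<times> 'n) * E * M" for i j
  proof -
    have "norm (block_row V i - block_row V j) \<le> (\<Sum>k\<in>(UNIV::'n set). \<Sum>r\<in>(UNIV::('m \<times> 'n) set). E * M)"
      by (intro order_trans[OF norm_matrix_le_sum_abs] sum_mono) (simp add: block_row_def entry)
    then show ?thesis by simp
  qed
  then have "diam_mat V \<le> real CARD('n) * real CARD('m \<times> 'n) * E * M"
    unfolding diam_mat_def by (intro Max.boundedI) auto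
  also have "\<dots> \<le> (real CARD('n) * real CARD('m \<times> 'n) * E + 1) * M"
    using \<open>M \<ge> 0\<close> by (simp add: algebra_simps)
  finally show "diam_mat V \<le> (real CARD('n) * real CARD('m \<times> 'n) * E + 1) * Max (range (\<lambda>q. norm ((transpose P2 ** V ** P2) *v axis q 1)))"
    unfolding M_def .
qed

theorem lemma6:
  fixes F :: "'m::finite \<Rightarrow> real^('m \<times> 'n::finite) \<Rightarrow> real \<Rightarrow> real^'n"
    and f :: "real^'n \<Rightarrow> real^'n"
    and DF :: "real \<Rightarrow> real^('m \<times> 'n) \<Rightarrow> real^('m \<times> 'n)^('m \<times> 'n)"
    and P0 :: "real^'n^'n"
    and P2 :: "real^'k::finite^('m \<times> 'n)"
    and s0 :: "real^'n"
    and S :: "real \<Rightarrow> real \<Rightarrow> real^'n"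
    and U :: "real \<Rightarrow> real \<Rightarrow> real^('m \<times> 'n)^('m \<times> 'n)"
  assumes A1a: "\<And>i s t. t \<ge> 0 \<Longrightarrow> F i (diag_state s) t = f s"
    and A1b_deriv: "\<And>t x. t \<ge> 0 \<Longrightarrow>
          (stack_field F t has_derivative (\<lambda>h. DF t x *v h)) (at x)"
    and A1b_cont: "\<And>t. t \<ge> 0 \<Longrightarrow> continuous_on UNIV (DF t)"
    and A1c: "\<exists>\<phi>. locally_bounded \<phi> \<and> (\<forall>t\<ge>0. \<forall>x. norm (DF t x) \<le> \<phi> x)"
    and A1d: "\<exists>K. locally_bounded (\<lambda>(x, y). K x y) \<and>
          (\<forall>t\<ge>0. \<forall>x y. norm (DF t x - DF t y) \<le> K x y * norm (x - y))"
    and A1e_F: "\<And>i x. (\<lambda>t. F i x t) measurable_on {0..}"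
    and A1e_DF: "\<And>x. (\<lambda>t. DF t x) measurable_on {0..}"
    and P0_orth: "orthogonal_matrix P0"
    and P_orth: "transpose (block_P (P1_of P0) P2) ** block_P (P1_of P0) P2 = mat 1"
                "block_P (P1_of P0) P2 ** transpose (block_P (P1_of P0) P2) = mat 1"
    and S_sol: "\<And>t0. t0 \<ge> 0 \<Longrightarrow> S t0 t0 = s0"
    and S_ode: "\<And>t0 t. t0 \<ge> 0 \<Longrightarrow> t \<ge> t0 \<Longrightarrow>
          (S t0 has_vector_derivative f (S t0 t)) (at t within {t0..})"
    and U_int: "\<And>t0 t. t0 \<ge> 0 \<Longrightarrow> t \<ge> t0 \<Longrightarrow>
          (\<lambda>\<tau>. DF \<tau> (diag_state (S t0 \<tau>)) ** U t0 \<tau>) integrable_on {t0..t}"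
    and U_sol: "\<And>t0 t. t0 \<ge> 0 \<Longrightarrow> t \<ge> t0 \<Longrightarrow>
          U t0 t = mat 1 + integral {t0..t} (\<lambda>\<tau>. DF \<tau> (diag_state (S t0 \<tau>)) ** U t0 \<tau>)"
  shows "lambda_P P2 U = eln (diam_rate U)"
proof -
  let ?red = "\<lambda>u t t0. norm ((transpose P2 ** U t0 (t + t0) ** P2) *v u)"
  have lambda: "lambda_P P2 U = (SUP u. exp_growth_rate (?red u))"
    unfolding lambda_P_def lyap_P_def exp_growth_rate_def ..
  have diam: "eln (diam_rate U) = exp_growth_rate (\<lambda>t t0. diam_mat (U t0 (t + t0)))"
    unfolding diam_rate_def by (rule eln_Limsup_SUP_powr) (rule diam_mat_nonneg)
  show ?thesis
    unfolding lambda diam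
  proof (rule antisym)
    show "(SUP u. exp_growth_rate (?red u)) \<le> exp_growth_rate (\<lambda>t t0. diam_mat (U t0 (t + t0)))"
    proof (rule SUP_least)
      fix u
      obtain C where "C > 0" "\<And>V. norm ((transpose P2 ** V ** P2) *v u) \<le> C * diam_mat V"
        using norm_reduced_mult_le_diam_mat[OF P_orth(1) P0_orth] by blast
      then show "exp_growth_rate (?red u) \<le> exp_growth_rate (\<lambda>t t0. diam_mat (U t0 (t + t0)))"
        by (intro exp_growth_rate_mono[where C = C]) auto
    qed
  next
    obtain C where "C > 0" and C: "\<And>V. (\<And>v. synchronised (V *v diag_state v)) \<Longrightarrow>
        diam_mat V \<le> C * Max (range (\<lambda>q. norm ((transpose P2 ** V ** P2) *v axis q 1)))"
      using diam_mat_le_reduced_columns[OF P_orth(2)] by blast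
    have "synchronised (U t0 (t + t0) *v diag_state v)" if "t > 0" "t0 \<ge> 0" for t t0 v
      using that A1a A1b_deriv A1c S_ode U_int U_sol by (intro flow_preserves_synchronised[of F f DF]) auto
    then have "exp_growth_rate (\<lambda>t t0. diam_mat (U t0 (t + t0)))
        \<le> exp_growth_rate (\<lambda>t t0. Max (range (\<lambda>q. ?red (axis q 1) t t0)))"
      using \<open>C > 0\<close> diam_mat_nonneg by (intro exp_growth_rate_mono[where C = C] C) auto
    also have "\<dots> \<le> Max (range (\<lambda>q. exp_growth_rate (?red (axis q 1))))"
      by (rule exp_growth_rate_Max_le)
    also have "\<dots> \<le> (SUP u. exp_growth_rate (?red u))"
      by (rule Max.boundedI) (auto intro: SUP_upper)
    finally show "exp_growth_rate (\<lambda>t t0. diam_mat (U t0 (t + t0))) \<le> (SUP u. exp_growth_rate (?red u))" .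
  qed
qed

end
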